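(* There is a deterministic distributed dynamic data structure for robust $3$-hop neighborhood listing which handles edge insertions and deletions in $O(1)$ amortized rounds.
   Context: Highly dynamic network model: a synchronous network on a fixed set $V$ of $n$ nodes with unique identifiers starts as the empty graph; at the beginning of round $i$ the graph is $G_i=(V,E_i)$, obtained from the previous graph by an adversary inserting and/or deleting an arbitrary (unbounded) set of edges. At the start of each round every node is notified only of the insertions/deletions of edges incident to it; then each node may send a message of $O(\log n)$ bits to each of its current neighbors. A distributed dynamic data structure consists of a local part $DS_v$ at each node $v$; at the end of every round, $DS_v$ may be queried and must answer immediately, without any further communication. The amortized round complexity is at most $c$ if for every round $i$, the number of rounds up to round $i$ in which at least one node $v$ has $DS_v$ in an inconsistent state, divided by the total number of topology changes that occurred up to round $i$, is at most $c$. For an edge $e$, its insertion time $t_e$ is the latest round in which $e$ was inserted. Let $E^{v,3}_i$ be the set of edges of $G_i$ having an endpoint at distance at most $2$ from $v$. The robust $3$-hop neighborhood $R^{v,3}_i\subseteq E^{v,3}_i$ consists of: all edges of $G_i$ incident to $v$; the edges of every path $v-u-w$ in $G_i$ with $t_{\{u,w\}}\geq t_{\{v,u\}}$; and the edges of every path $v-u-w-x$ in $G_i$ with $t_{\{w,x\}}\geq t_{\{u,w\}}$ and $t_{\{w,x\}}\geq t_{\{v,u\}}$. Robust $3$-hop neighborhood listing: in round $i$, $DS_v$ must respond to a query $\{u,w\}$ with $\texttt{true}$ if $\{u,w\}\in R^{v,3}_{i-1}$, with $\texttt{false}$ if $\{u,w\}\notin E^{v,3}_{i-1}$, or with $\texttt{inconsistent}$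 if $DS_v$ is in an inconsistent state. *)

theory Defs
  imports Complex_Main
begin

text \<open>A dynamic graph (adversary) is a
  sequence G of edge sets: G i is the edge set of the graph in round i
  (i \<ge> 1); G 0 is the initial empty graph.\<close>

type_synonym dyn_graph = "nat \<Rightarrow> nat set set"

definition valid_dyn_graph :: "nat set \<Rightarrow> dyn_graph \<Rightarrow> bool" where
  "valid_dyn_graph V G \<longleftrightarrow> G 0 = {} \<and>
     (\<forall>i. \<forall>e\<in>G i. \<exists>u w. e = {u, w} \<and> u \<noteq> w \<and> u \<in> V \<and> w \<in> V)"

definition changes :: "dyn_graph \<Rightarrow> nat \<Rightarrow> nat" where
  "changes G i = (\<Sum>j\<in>{1..i}. card ((G j - G (j - 1)) \<union> (G (j - 1) - G j)))"

definition ins_time :: "dyn_graph \<Rightarrow> nat \<Rightarrow> nat set \<Rightarrow> nat" where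
  "ins_time G i e = (GREATEST j. 0 < j \<and> j \<le> i \<and> e \<in> G j \<and> e \<notin> G (j - 1))"

definition dist_le2 :: "nat set set \<Rightarrow> nat \<Rightarrow> nat \<Rightarrow> bool" where
  "dist_le2 E v x \<longleftrightarrow> x = v \<or> {v, x} \<in> E \<or> (\<exists>u. {v, u} \<in> E \<and> {u, x} \<in> E)"

definition E3 :: "dyn_graph \<Rightarrow> nat \<Rightarrow> nat \<Rightarrow> nat set set" where
  "E3 G v i = {e \<in> G i. \<exists>x\<in>e. dist_le2 (G i) v x}"

definition R3 :: "dyn_graph \<Rightarrow> nat \<Rightarrow> nat \<Rightarrow> nat set set" where
  "R3 G v i =
     {e \<in> G i. v \<in> e}
   \<union> {e. \<exists>u w. (e = {v, u} \<or> e = {u, w}) \<and> distinct [v, u, w] \<and>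
          {v, u} \<in> G i \<and> {u, w} \<in> G i \<and>
          ins_time G i {u, w} \<ge> ins_time G i {v, u}}
   \<union> {e. \<exists>u w x. (e = {v, u} \<or> e = {u, w} \<or> e = {w, x}) \<and> distinct [v, u, w, x] \<and>
          {v, u} \<in> G i \<and> {u, w} \<in> G i \<and> {w, x} \<in> G i \<and>
          ins_time G i {w, x} \<ge> ins_time G i {u, w} \<and>
          ins_time G i {w, x} \<ge> ins_time G i {v, u}}"

text \<open>A deterministic distributed algorithm with local states of type nat (w.l.o.g.:
  every reachable local state is determined by a finite local history, hence
  countably many states suffice).
  \<^item> init n v: initial state of node v, knowing n and its own identifier v;
  \<^item> notify s I D: local update after being notified of the inserted (I) and deleted
    (D) incident edges, given by the identifiers of the other endpoints;
  \<^item> send s u: message (a bit string, or no message) sent to neighbour u;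
  \<^item> receive s M: local update after receiving M u from each current neighbour u
    (M u = None if nothing was received from u);
  \<^item> consistent s: whether DS_v is in a consistent state;
  \<^item> answer s e: the answer (true/false) to query e when consistent.\<close>

record dalg =
  init :: "nat \<Rightarrow> nat \<Rightarrow> nat"
  notify :: "nat \<Rightarrow> nat set \<Rightarrow> nat set \<Rightarrow> nat"
  send :: "nat \<Rightarrow> nat \<Rightarrow> bool list option"
  receive :: "nat \<Rightarrow> (nat \<Rightarrow> bool list option) \<Rightarrow> nat"
  consistent :: "nat \<Rightarrow> bool"
  answer :: "nat \<Rightarrow> nat set \<Rightarrow> bool"

definition mid_state :: "dalg \<Rightarrow> dyn_graph \<Rightarrow> nat \<Rightarrow> (nat \<Rightarrow> nat) \<Rightarrow> nat \<Rightarrow> nat" where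
  "mid_state A G j S v =
     notify A (S v) {u. {v, u} \<in> G (Suc j) - G j} {u. {v, u} \<in> G j - G (Suc j)}"

text \<open>run A n G j v: state of node v at the end of round j (j = 0: initial state).\<close>
primrec run :: "dalg \<Rightarrow> nat \<Rightarrow> dyn_graph \<Rightarrow> nat \<Rightarrow> nat \<Rightarrow> nat" where
  "run A n G 0 = (\<lambda>v. init A n v)"
| "run A n G (Suc j) = (\<lambda>v. receive A (mid_state A G j (run A n G j) v)
      (\<lambda>u. if {u, v} \<in> G (Suc j) then send A (mid_state A G j (run A n G j) u) v else None))"

definition msg :: "dalg \<Rightarrow> nat \<Rightarrow> dyn_graph \<Rightarrow> nat \<Rightarrow> nat \<Rightarrow> nat \<Rightarrow> bool list option" where
  "msg A n G j u v = send A (mid_state A G j (run A n G j) u) v"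

definition msg_bound :: "nat \<Rightarrow> nat \<Rightarrow> nat" where
  "msg_bound B n = B * nat \<lceil>log 2 (real n + 1)\<rceil>"

text \<open>A query in round i is answered by the state at the end of
  round i with respect to G_{i-1}.\<close>
definition solves_R3_listing ::
  "dalg \<Rightarrow> nat \<Rightarrow> nat \<Rightarrow> nat \<Rightarrow> nat set \<Rightarrow> dyn_graph \<Rightarrow> bool" where
  "solves_R3_listing A c B n V G \<longleftrightarrow>
     (\<forall>j u v m. {u, v} \<in> G (Suc j) \<longrightarrow> msg A n G j u v = Some m \<longrightarrow>
                length m \<le> msg_bound B n)
   \<and> (\<forall>i \<ge> 1. \<forall>v\<in>V. consistent A (run A n G i v) \<longrightarrow>
        (\<forall>e. (e \<in> R3 G v (i - 1) \<longrightarrow> answer A (run A n G i v) e)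
           \<and> (e \<notin> E3 G v (i - 1) \<longrightarrow> \<not> answer A (run A n G i v) e)))
   \<and> (\<forall>i. card {j \<in> {1..i}. \<exists>v\<in>V. \<not> consistent A (run A n G j v)} \<le> c * changes G i)"

end

(* Every node keeps a journal of entries stamped with the round in which they were logged: an own
   entry records that an incident edge appeared or disappeared, a relayed entry records an own entry
   broadcast by a neighbour.  Each round a node broadcasts the oldest entry of its journal not yet
   broadcast.  By this FIFO discipline, what v has heard from u since {v,u} was inserted is a copy of
   the part of u's journal logged from that insertion on.  So v learns every edge {u,w} inserted no
   earlier than {v,u} from u's own entries, and every edge {w,x} inserted no earlier than {u,w} and
   {v,u} from what u relayed from w after its last own entry about w.  A node declares itself
   consistent only if no edge at it or at a neighbour changed and its neighbours and their neighbours
   have broadcast their whole journals; then these copies are complete.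

   Amortization: a change creates two own entries; broadcasting an own entry adds one relayed entry to
   the journal of each neighbour.  Hence for every node u, the unbroadcast part of u's journal, plus
   the number of unbroadcast own entries in the network, plus the number of rounds in which some
   journal was not yet broadcast, never exceeds three times the number of changes.  A round is
   inconsistent only if it has a change or a journal backlog, or the preceding round had a backlog,
   which gives at most 7 inconsistent rounds per change. *)

theory Submission
  imports Defs "HOL-Library.Countable"
begin

section \<open>Journals\<close>

(* Own x b: the edge to x is now present (b) or absent; Relayed w x b: neighbour w broadcast Own x b. *)
datatype entry = Own nat bool | Relayed nat nat bool

type_synonym journal = "(nat \<times> entry) list"

fun is_own :: "entry \<Rightarrow> bool" where
  "is_own (Own _ _) = True"
| "is_own (Relayed _ _ _) = False"

fun is_own_of :: "nat \<Rightarrow> entry \<Rightarrow> bool" where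
  "is_own_of x (Own y _) = (y = x)"
| "is_own_of x (Relayed _ _ _) = False"

fun last_own :: "nat \<Rightarrow> journal \<Rightarrow> (nat \<times> bool) option" where
  "last_own x [] = None"
| "last_own x ((t, e) # ys) = (case last_own x ys of
      None \<Rightarrow> (case e of Own y b \<Rightarrow> if y = x then Some (t, b) else None | Relayed _ _ _ \<Rightarrow> None)
    | found \<Rightarrow> found)"

definition last_status :: "nat \<Rightarrow> journal \<Rightarrow> bool option" where
  "last_status x xs = map_option snd (last_own x xs)"

definition since_own :: "nat \<Rightarrow> journal \<Rightarrow> journal" where
  "since_own w xs = rev (takeWhile (\<lambda>y. \<not> is_own_of w (snd y)) (rev xs))"

fun relayed_from :: "nat \<Rightarrow> journal \<Rightarrow> journal" where
  "relayed_from w [] = []"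
| "relayed_from w ((t, Relayed w' x b) # ys) =
     (if w' = w then (t, Own x b) # relayed_from w ys else relayed_from w ys)"
| "relayed_from w ((t, Own _ _) # ys) = relayed_from w ys"

definition later_copy :: "journal \<Rightarrow> journal \<Rightarrow> bool" where
  "later_copy xs ys \<longleftrightarrow> list_all2 (\<lambda>a b. snd a = snd b \<and> fst b \<le> fst a) xs ys"

lemma last_own_append:
  "last_own x (xs @ ys) = (case last_own x ys of None \<Rightarrow> last_own x xs | found \<Rightarrow> found)"
  by (induction x xs rule: last_own.induct) (auto split: option.splits entry.splits)

lemma last_own_append_no_own:
  "\<forall>y\<in>set ys. \<not> is_own_of x (snd y) \<Longrightarrow> last_own x (xs @ ys) = last_own x xs"
proof -
  assume "\<forall>y\<in>set ys. \<not> is_own_of x (snd y)"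
  then have "last_own x ys = None"
    by (induction x ys rule: last_own.induct) (auto split: entry.splits)
  then show ?thesis by (simp add: last_own_append)
qed

lemma last_own_suffix: "last_own x ys = Some p \<Longrightarrow> last_own x (zs @ ys) = Some p"
  by (simp add: last_own_append)

lemma last_own_own_entries:
  "last_own x (map (\<lambda>y. (t, Own y (P y))) zs) = (if x \<in> set zs then Some (t, P x) else None)"
  by (induction zs) auto

lemma last_own_stamp_mem: "last_own x ys = Some (t, b) \<Longrightarrow> t \<in> fst ` set ys"
  by (induction x ys rule: last_own.induct) (force split: option.splits entry.splits if_splits)+

lemma last_own_filter_own: "last_own x (filter (\<lambda>y. is_own (snd y)) xs) = last_own x xs"
  by (induction x xs rule: last_own.induct) (auto split: option.splits entry.splits)

lemma last_own_drop_earlier: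
  assumes "\<forall>y\<in>set (take k xs). fst y < t0" "last_own x xs = Some (t, b)" "t0 \<le> t"
  shows "last_own x (drop k xs) = Some (t, b)"
proof (cases "last_own x (drop k xs)")
  case None
  then have "last_own x (take k xs) = Some (t, b)"
    using assms(2) last_own_append[of x "take k xs" "drop k xs"] by simp
  then show ?thesis using assms(1,3) last_own_stamp_mem by fastforce
next
  case (Some p)
  then show ?thesis using assms(2) last_own_append[of x "take k xs" "drop k xs"] by simp
qed

lemma last_own_later_copy:
  "later_copy xs ys \<Longrightarrow>
   rel_option (\<lambda>a b. snd a = snd b \<and> fst b \<le> fst a) (last_own x xs) (last_own x ys)"
  unfolding later_copy_def
proof (induction xs ys rule: list_all2_induct)
  case (Cons a xs b ys)
  then show ?case
    by (cases a; cases b)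
      (auto simp: option.rel_sel split: option.splits entry.splits)
qed simp

lemma later_copy_last_status:
  "later_copy xs ys \<Longrightarrow> last_status x xs = last_status x ys"
  unfolding last_status_def by (drule last_own_later_copy[of _ _ x]) (auto elim: option.rel_cases)

lemma later_copy_last_own_stamp:
  "later_copy xs ys \<Longrightarrow> last_own x ys = Some (t, b) \<Longrightarrow> \<exists>t'\<ge>t. last_own x xs = Some (t', b)"
  by (drule last_own_later_copy[of _ _ x]) (auto elim: option.rel_cases)

lemma since_own_append_no_own:
  assumes "\<forall>y\<in>set ys. \<not> is_own_of w (snd y)"
  shows "since_own w (xs @ ys) = since_own w xs @ ys"
proof -
  have "takeWhile (\<lambda>y. \<not> is_own_of w (snd y)) (rev ys @ rev xs)
      = rev ys @ takeWhile (\<lambda>y. \<not> is_own_of w (snd y)) (rev xs)"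
    using assms by (intro takeWhile_append2) auto
  then show ?thesis by (simp add: since_own_def)
qed

lemma since_own_append_own:
  "\<exists>y\<in>set ys. is_own_of w (snd y) \<Longrightarrow> since_own w (xs @ ys) = since_own w ys"
  by (auto simp: since_own_def takeWhile_append1)

lemma since_own_subset: "set (since_own w xs) \<subseteq> set xs"
  by (auto simp: since_own_def dest: set_takeWhileD)

lemma since_own_drop: "\<exists>zs. since_own w xs = zs @ since_own w (drop k xs)"
proof (cases "\<exists>y\<in>set (drop k xs). is_own_of w (snd y)")
  case True
  then show ?thesis using since_own_append_own[of "drop k xs" w "take k xs"] by simp
next
  case False
  then have "since_own w (drop k xs) = drop k xs"
    using since_own_append_no_own[of "drop k xs" w "[]"] by (simp add: since_own_def)
  then show ?thesis using False since_own_append_no_own[of "drop k xs" w "take k xs"] by auto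
qed

lemma since_own_later_copy: "later_copy xs ys \<Longrightarrow> later_copy (since_own w xs) (since_own w ys)"
proof -
  assume "later_copy xs ys"
  then have "later_copy (rev xs) (rev ys)" by (simp add: later_copy_def list_all2_rev)
  then have "later_copy (takeWhile (\<lambda>y. \<not> is_own_of w (snd y)) (rev xs))
      (takeWhile (\<lambda>y. \<not> is_own_of w (snd y)) (rev ys))"
    unfolding later_copy_def by (induction rule: list_all2_induct) auto
  then show ?thesis by (simp add: since_own_def later_copy_def list_all2_rev)
qed

lemma relayed_from_append [simp]:
  "relayed_from w (xs @ ys) = relayed_from w xs @ relayed_from w ys"
  by (induction w xs rule: relayed_from.induct) auto

lemma relayed_from_stamp: "y \<in> set (relayed_from w xs) \<Longrightarrow> fst y \<in> fst ` set xs"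
  by (induction w xs rule: relayed_from.induct) (auto split: if_splits)

lemma relayed_from_own_entries: "\<forall>y\<in>set ys. is_own (snd y) \<Longrightarrow> relayed_from w ys = []"
  by (induction w ys rule: relayed_from.induct) auto

lemma relayed_from_later_copy:
  "later_copy xs ys \<Longrightarrow> later_copy (relayed_from w xs) (relayed_from w ys)"
  unfolding later_copy_def
proof (induction xs ys rule: list_all2_induct)
  case (Cons a xs b ys)
  then show ?case by (cases a; cases b; cases "snd a") auto
qed simp

lemma last_own_relayed_drop_earlier:
  assumes "\<forall>y\<in>set (take k xs). fst y < t0" "last_own x (relayed_from w (since_own w xs)) = Some (t, b)"
    "t0 \<le> t"
  shows "last_own x (relayed_from w (since_own w (drop k xs))) = Some (t, b)"
proof (cases "\<exists>y\<in>set (drop k xs). is_own_of w (snd y)")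
  case True
  then show ?thesis using assms(2) since_own_append_own[of "drop k xs" w "take k xs"] by simp
next
  case False
  then have split: "since_own w xs = since_own w (take k xs) @ drop k xs"
    and all: "since_own w (drop k xs) = drop k xs"
    using since_own_append_no_own[of "drop k xs" w "take k xs"]
      since_own_append_no_own[of "drop k xs" w "[]"] by (simp_all add: since_own_def)
  show ?thesis
  proof (cases "last_own x (relayed_from w (drop k xs))")
    case None
    then have "last_own x (relayed_from w (since_own w (take k xs))) = Some (t, b)"
      using assms(2) by (simp add: split last_own_append)
    then have "t \<in> fst ` set (relayed_from w (since_own w (take k xs)))"
      by (rule last_own_stamp_mem)
    then have "t \<in> fst ` set (take k xs)"
      using relayed_from_stamp since_own_subset by blast
    then show ?thesis using assms(1,3) by fastforce
  next
    case (Some p)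
    then show ?thesis using assms(2) by (simp add: split all last_own_append)
  qed
qed

(* The journal heard from a neighbour is a copy (restamped with the rounds of reception) of the part
   of the neighbour's broadcast journal L that contains every entry logged at time t or later. *)
definition heard_suffix :: "journal \<Rightarrow> journal \<Rightarrow> nat \<Rightarrow> bool" where
  "heard_suffix hs L t \<longleftrightarrow>
     (\<exists>k\<le>length L. later_copy hs (drop k L) \<and> (\<forall>y\<in>set (take k L). fst y < t))"

lemma heard_suffix_Nil: "\<forall>y\<in>set L. fst y < t \<Longrightarrow> heard_suffix [] L t"
  unfolding heard_suffix_def later_copy_def by (intro exI[of _ "length L"]) auto

lemma heard_suffix_append:
  assumes "heard_suffix hs L t" "later_copy hs' L'"
  shows "heard_suffix (hs @ hs') (L @ L') t"
proof -
  obtain k where "k \<le> length L" "later_copy hs (drop k L)" "\<forall>y\<in>set (take k L). fst y < t"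
    using assms(1) by (auto simp: heard_suffix_def)
  then show ?thesis
    using assms(2) unfolding heard_suffix_def later_copy_def
    by (intro exI[of _ k]) (auto intro: list_all2_appendI)
qed

lemma heard_suffix_own_status:
  assumes "heard_suffix hs L t" "last_status x hs = Some b"
  shows "\<exists>t'. last_own x L = Some (t', b)"
proof -
  obtain k where "later_copy hs (drop k L)" using assms(1) by (auto simp: heard_suffix_def)
  then have "last_status x (drop k L) = Some b"
    using assms(2) by (simp add: later_copy_last_status)
  then obtain t' where "last_own x (drop k L) = Some (t', b)" by (auto simp: last_status_def)
  then have "last_own x (take k L @ drop k L) = Some (t', b)" by (rule last_own_suffix)
  then show ?thesis by auto
qed

lemma heard_suffix_own_recent:
  assumes "heard_suffix hs L t" "last_own x L = Some (t', b)" "t \<le> t'"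
  shows "\<exists>t''\<ge>t'. last_own x hs = Some (t'', b)"
proof -
  obtain k where k: "later_copy hs (drop k L)" "\<forall>y\<in>set (take k L). fst y < t"
    using assms(1) by (auto simp: heard_suffix_def)
  have "last_own x (drop k L) = Some (t', b)" using k(2) assms(2,3) by (rule last_own_drop_earlier)
  then show ?thesis using k(1) later_copy_last_own_stamp by blast
qed

lemma heard_suffix_relayed_status:
  assumes "heard_suffix hs L t"
    "last_status x (relayed_from w (since_own w hs)) = Some b"
  shows "\<exists>t'. last_own x (relayed_from w (since_own w L)) = Some (t', b)"
proof -
  obtain k where "later_copy hs (drop k L)" using assms(1) by (auto simp: heard_suffix_def)
  then have "later_copy (relayed_from w (since_own w hs)) (relayed_from w (since_own w (drop k L)))"
    by (intro relayed_from_later_copy since_own_later_copy)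
  then have "last_status x (relayed_from w (since_own w (drop k L))) = Some b"
    using assms(2) by (simp add: later_copy_last_status)
  then obtain t' where "last_own x (relayed_from w (since_own w (drop k L))) = Some (t', b)"
    by (auto simp: last_status_def)
  moreover obtain zs where "since_own w L = zs @ since_own w (drop k L)"
    using since_own_drop by blast
  ultimately show ?thesis by (auto simp: last_own_suffix)
qed

lemma heard_suffix_relayed_recent:
  assumes "heard_suffix hs L t" "last_own x (relayed_from w (since_own w L)) = Some (t', b)" "t \<le> t'"
  shows "last_status x (relayed_from w (since_own w hs)) = Some b"
proof -
  obtain k where k: "later_copy hs (drop k L)" "\<forall>y\<in>set (take k L). fst y < t"
    using assms(1) by (auto simp: heard_suffix_def)
  have "last_own x (relayed_from w (since_own w (drop k L))) = Some (t', b)"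
    using k(2) assms(2,3) by (rule last_own_relayed_drop_earlier)
  then have "last_status x (relayed_from w (since_own w (drop k L))) = Some b"
    by (simp add: last_status_def)
  moreover have "later_copy (relayed_from w (since_own w hs)) (relayed_from w (since_own w (drop k L)))"
    using k(1) by (intro relayed_from_later_copy since_own_later_copy)
  ultimately show ?thesis by (simp add: later_copy_last_status)
qed

section \<open>The algorithm of a node\<close>

record node_state =
  ns_size :: nat
  ns_self :: nat
  ns_round :: nat
  ns_nbrs :: "nat set"
  ns_log :: journal
  ns_sent :: nat
  ns_heard :: "nat \<Rightarrow> journal"
  ns_changed :: bool
  ns_nbrs_flushed :: bool
  ns_consistent :: bool

definition node_init :: "nat \<Rightarrow> nat \<Rightarrow> node_state" where
  "node_init n v = \<lparr>ns_size = n, ns_self = v, ns_round = 0, ns_nbrs = {}, ns_log = [], ns_sent = 0,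
     ns_heard = (\<lambda>_. []), ns_changed = False, ns_nbrs_flushed = True, ns_consistent = True\<rparr>"

definition node_notify :: "node_state \<Rightarrow> nat set \<Rightarrow> nat set \<Rightarrow> node_state" where
  "node_notify s I D = s\<lparr>ns_round := Suc (ns_round s), ns_nbrs := (ns_nbrs s \<union> I) - D,
     ns_log := ns_log s @ map (\<lambda>x. (Suc (ns_round s), Own x (x \<in> I))) (sorted_list_of_set (I \<union> D)),
     ns_heard := (\<lambda>u. if u \<in> I \<union> D then [] else ns_heard s u),
     ns_changed := (I \<union> D \<noteq> {})\<rparr>"

type_synonym message = "bool \<times> bool \<times> entry option"

definition flushing :: "node_state \<Rightarrow> bool" where
  "flushing s \<longleftrightarrow> length (ns_log s) \<le> Suc (ns_sent s)"

definition settled :: "node_state \<Rightarrow> bool" where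
  "settled s \<longleftrightarrow> \<not> ns_changed s \<and> flushing s \<and> ns_nbrs_flushed s"

definition next_entry :: "node_state \<Rightarrow> entry option" where
  "next_entry s = (if ns_sent s < length (ns_log s) then Some (snd (ns_log s ! ns_sent s)) else None)"

definition node_message :: "node_state \<Rightarrow> message" where
  "node_message s = (flushing s, settled s, next_entry s)"

definition relay :: "nat \<Rightarrow> nat \<Rightarrow> message option \<Rightarrow> journal" where
  "relay t u m = (case m of Some (_, _, Some (Own x b)) \<Rightarrow> [(t, Relayed u x b)] | _ \<Rightarrow> [])"

definition heard_entry :: "nat \<Rightarrow> message option \<Rightarrow> journal" where
  "heard_entry t m = (case m of Some (_, _, Some e) \<Rightarrow> [(t, e)] | _ \<Rightarrow> [])"

definition node_receive :: "node_state \<Rightarrow> (nat \<Rightarrow> message option) \<Rightarrow> node_state" where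
  "node_receive s M = s\<lparr>ns_sent := min (Suc (ns_sent s)) (length (ns_log s)),
     ns_log := ns_log s @ concat (map (\<lambda>u. relay (ns_round s) u (M u)) (sorted_list_of_set (ns_nbrs s))),
     ns_heard := (\<lambda>u. if u \<in> ns_nbrs s then ns_heard s u @ heard_entry (ns_round s) (M u)
                     else ns_heard s u),
     ns_nbrs_flushed := (\<forall>u\<in>ns_nbrs s. case M u of Some (f, _, _) \<Rightarrow> f | None \<Rightarrow> False),
     ns_consistent := (\<not> ns_changed s \<and>
                       (\<forall>u\<in>ns_nbrs s. case M u of Some (_, g, _) \<Rightarrow> g | None \<Rightarrow> False))\<rparr>"

definition node_answer :: "node_state \<Rightarrow> nat set \<Rightarrow> bool" where
  "node_answer s e \<longleftrightarrow> (\<exists>u\<in>ns_nbrs s. e = {ns_self s, u}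
      \<or> (\<exists>w. last_status w (ns_heard s u) = Some True \<and> e = {u, w})
      \<or> (\<exists>w x. last_status x (relayed_from w (since_own w (ns_heard s u))) = Some True
               \<and> (e = {u, w} \<or> e = {w, x})))"

fun entry_ids :: "entry \<Rightarrow> nat set" where
  "entry_ids (Own x _) = {x}"
| "entry_ids (Relayed w x _) = {w, x}"

lemma relay_set:
  "y \<in> set (relay t u m) \<Longrightarrow> \<exists>f g x b. m = Some (f, g, Some (Own x b)) \<and> y = (t, Relayed u x b)"
  by (auto simp: relay_def split: option.splits entry.splits)

lemma relayed_from_relay:
  "relayed_from w (relay t u m) = (if u = w then filter (\<lambda>y. is_own (snd y)) (heard_entry t m) else [])"
  by (auto simp: relay_def heard_entry_def split: option.splits entry.splits)

lemma relayed_from_relays: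
  "distinct us \<Longrightarrow> relayed_from w (concat (map (\<lambda>u. relay t u (M u)) us))
     = (if w \<in> set us then filter (\<lambda>y. is_own (snd y)) (heard_entry t (M w)) else [])"
  by (induction us) (auto simp: relayed_from_relay)

lemma next_entry_in_log: "next_entry s = Some e \<Longrightarrow> e \<in> snd ` set (ns_log s)"
  by (auto simp: next_entry_def split: if_splits)

locale dyn_network =
  fixes n :: nat and V :: "nat set" and G :: dyn_graph
  assumes finite_V: "finite V" and valid: "valid_dyn_graph V G"
begin

lemma G_0 [simp]: "G 0 = {}"
  using valid by (simp add: valid_dyn_graph_def)

lemma edge_cases:
  assumes "e \<in> G i"
  obtains a b where "e = {a, b}" "a \<noteq> b" "a \<in> V" "b \<in> V"
  using valid assms unfolding valid_dyn_graph_def by blast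

lemma edge_in_V:
  assumes "{a, b} \<in> G i"
  shows "a \<in> V" "b \<in> V" "a \<noteq> b"
proof -
  obtain u w where "{a, b} = {u, w}" "u \<noteq> w" "u \<in> V" "w \<in> V"
    using assms by (rule edge_cases)
  then show "a \<in> V" "b \<in> V" "a \<noteq> b" by (auto simp: doubleton_eq_iff)
qed

lemma finite_G: "finite (G i)"
proof -
  have "G i \<subseteq> Pow V" by (auto elim: edge_cases)
  then show ?thesis using finite_V finite_subset by blast
qed

lemma finite_nbrs: "finite {x. {v, x} \<in> G i}"
  by (rule finite_subset[OF _ finite_V]) (auto dest: edge_in_V)

lemma ins_time_old:
  assumes "e \<in> G i"
  shows "ins_time G (Suc i) e = ins_time G i e"
proof -
  have "(\<lambda>j. 0 < j \<and> j \<le> Suc i \<and> e \<in> G j \<and> e \<notin> G (j - 1))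
      = (\<lambda>j. 0 < j \<and> j \<le> i \<and> e \<in> G j \<and> e \<notin> G (j - 1))"
    using assms by (auto simp: fun_eq_iff le_Suc_eq)
  then show ?thesis unfolding ins_time_def by simp
qed

lemma ins_time_new: "e \<in> G (Suc i) \<Longrightarrow> e \<notin> G i \<Longrightarrow> ins_time G (Suc i) e = Suc i"
  unfolding ins_time_def by (intro Greatest_equality) auto

definition inserted :: "nat \<Rightarrow> nat \<Rightarrow> nat set" where
  "inserted j v = {u. {v, u} \<in> G (Suc j) - G j}"

definition deleted :: "nat \<Rightarrow> nat \<Rightarrow> nat set" where
  "deleted j v = {u. {v, u} \<in> G j - G (Suc j)}"

definition toggled :: "nat \<Rightarrow> nat \<Rightarrow> nat set" where
  "toggled j v = {x. ({v, x} \<in> G (Suc j)) \<noteq> ({v, x} \<in> G j)}"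

primrec state :: "nat \<Rightarrow> nat \<Rightarrow> node_state" where
  "state 0 = node_init n"
| "state (Suc j) = (\<lambda>v. node_receive (node_notify (state j v) (inserted j v) (deleted j v))
      (\<lambda>u. if {u, v} \<in> G (Suc j)
           then Some (node_message (node_notify (state j u) (inserted j u) (deleted j u))) else None))"

definition notified :: "nat \<Rightarrow> nat \<Rightarrow> node_state" where
  "notified j v = node_notify (state j v) (inserted j v) (deleted j v)"

definition inbox :: "nat \<Rightarrow> nat \<Rightarrow> nat \<Rightarrow> message option" where
  "inbox j v u = (if {u, v} \<in> G (Suc j) then Some (node_message (notified j u)) else None)"

lemma state_Suc: "state (Suc j) v = node_receive (notified j v) (inbox j v)"
  unfolding notified_def inbox_def[abs_def] by simp

declare state.simps(2) [simp del]

lemma toggled_eq: "toggled j v = inserted j v \<union> deleted j v"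
  by (auto simp: inserted_def deleted_def toggled_def)

lemma finite_toggled: "finite (toggled j v)"
  unfolding toggled_def by (rule finite_subset[OF _ finite_V]) (auto dest: edge_in_V)

lemma toggled_in_V: "x \<in> toggled j v \<Longrightarrow> x \<in> V"
  by (auto simp: toggled_def dest: edge_in_V)

lemma state_size [simp]: "ns_size (state r v) = n"
  by (induction r arbitrary: v) (simp_all add: node_init_def state_Suc node_receive_def
      notified_def node_notify_def)

lemma state_self [simp]: "ns_self (state r v) = v"
  by (induction r arbitrary: v) (simp_all add: node_init_def state_Suc node_receive_def
      notified_def node_notify_def)

lemma state_round [simp]: "ns_round (state r v) = r"
  by (induction r arbitrary: v) (simp_all add: node_init_def state_Suc node_receive_def
      notified_def node_notify_def)

lemma state_nbrs: "ns_nbrs (state r v) = {u. {v, u} \<in> G r}"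
  by (induction r arbitrary: v) (auto simp: node_init_def state_Suc node_receive_def
      notified_def node_notify_def inserted_def deleted_def)

lemma state_sent_le: "ns_sent (state r v) \<le> length (ns_log (state r v))"
  by (induction r arbitrary: v) (simp_all add: node_init_def state_Suc node_receive_def
      notified_def node_notify_def)

lemma notified_simps [simp]:
  "ns_size (notified j v) = n" "ns_self (notified j v) = v" "ns_round (notified j v) = Suc j"
  "ns_sent (notified j v) = ns_sent (state j v)"
  "ns_nbrs (notified j v) = {u. {v, u} \<in> G (Suc j)}"
  "ns_nbrs_flushed (notified j v) = ns_nbrs_flushed (state j v)"
  "ns_changed (notified j v) \<longleftrightarrow> toggled j v \<noteq> {}"
  "ns_heard (notified j v) u = (if u \<in> toggled j v then [] else ns_heard (state j v) u)"
  using finite_toggled[of j v]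
  by (auto simp: notified_def node_notify_def state_nbrs toggled_eq inserted_def deleted_def)

lemma notified_log:
  "ns_log (notified j v)
     = ns_log (state j v) @ map (\<lambda>x. (Suc j, Own x ({v, x} \<in> G (Suc j)))) (sorted_list_of_set (toggled j v))"
proof -
  let ?L = "sorted_list_of_set (toggled j v)"
  have "map (\<lambda>x. (Suc j, Own x (x \<in> inserted j v))) ?L
      = map (\<lambda>x. (Suc j, Own x ({v, x} \<in> G (Suc j)))) ?L"
  proof (rule map_cong[OF refl])
    fix x assume "x \<in> set ?L"
    then have "x \<in> toggled j v" using finite_toggled[of j v] by simp
    then show "(Suc j, Own x (x \<in> inserted j v)) = (Suc j, Own x ({v, x} \<in> G (Suc j)))"
      by (auto simp: toggled_def inserted_def)
  qed
  moreover have "ns_log (notified j v) = ns_log (state j v) @ map (\<lambda>x. (Suc j, Own x (x \<in> inserted j v))) ?L"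
    by (simp add: notified_def node_notify_def toggled_eq)
  ultimately show ?thesis by simp
qed

lemma inbox_nbr: "{v, u} \<in> G (Suc j) \<Longrightarrow> inbox j v u = Some (node_message (notified j u))"
  by (simp add: inbox_def insert_commute)

lemma state_log_Suc:
  "ns_log (state (Suc j) v) = ns_log (notified j v) @
     concat (map (\<lambda>u. relay (Suc j) u (inbox j v u)) (sorted_list_of_set (ns_nbrs (notified j v))))"
  by (simp add: state_Suc node_receive_def)

lemma state_sent_Suc:
  "ns_sent (state (Suc j) v) = min (Suc (ns_sent (state j v))) (length (ns_log (notified j v)))"
  by (simp add: state_Suc node_receive_def)

lemma state_heard_Suc:
  "ns_heard (state (Suc j) v) u = (if {v, u} \<in> G (Suc j)
     then ns_heard (notified j v) u @ heard_entry (Suc j) (inbox j v u) else ns_heard (notified j v) u)"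
  by (simp add: state_Suc node_receive_def)

lemma state_nbrs_flushed_Suc:
  "ns_nbrs_flushed (state (Suc j) v) \<longleftrightarrow> (\<forall>u. {v, u} \<in> G (Suc j) \<longrightarrow> flushing (notified j u))"
  by (simp add: state_Suc node_receive_def inbox_nbr node_message_def)

lemma state_consistent_Suc:
  "ns_consistent (state (Suc j) v) \<longleftrightarrow>
     toggled j v = {} \<and> (\<forall>u. {v, u} \<in> G (Suc j) \<longrightarrow> settled (notified j u))"
  by (simp add: state_Suc node_receive_def inbox_nbr node_message_def)

lemma finite_nbrs_notified: "finite (ns_nbrs (notified j v))"
  by (simp add: finite_nbrs)

lemma relay_entry:
  assumes "y \<in> set (relay t u (inbox j v u))"
  obtains x b where "y = (t, Relayed u x b)" "{v, u} \<in> G (Suc j)"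
    "Own x b \<in> snd ` set (ns_log (notified j u))"
proof -
  from relay_set[OF assms] show ?thesis
    using that next_entry_in_log
    by (auto simp: inbox_def node_message_def insert_commute split: if_splits)
qed

lemma notified_log_entries:
  assumes "\<forall>y\<in>set (ns_log (state j v)). fst y \<le> j \<and> entry_ids (snd y) \<subseteq> V"
  shows "\<forall>y\<in>set (ns_log (notified j v)). fst y \<le> Suc j \<and> entry_ids (snd y) \<subseteq> V"
proof
  fix y assume "y \<in> set (ns_log (notified j v))"
  then have "y \<in> set (ns_log (state j v)) \<or> (\<exists>x\<in>toggled j v. y = (Suc j, Own x ({v, x} \<in> G (Suc j))))"
    using finite_toggled[of j v] by (auto simp: notified_log)
  then show "fst y \<le> Suc j \<and> entry_ids (snd y) \<subseteq> V"
    using assms toggled_in_V by auto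
qed

lemma state_log_entries: "\<forall>y\<in>set (ns_log (state r v)). fst y \<le> r \<and> entry_ids (snd y) \<subseteq> V"
proof (induction r arbitrary: v)
  case 0
  then show ?case by (simp add: node_init_def)
next
  case (Suc j)
  have notified: "\<forall>y\<in>set (ns_log (notified j u)). fst y \<le> Suc j \<and> entry_ids (snd y) \<subseteq> V" for u
    using Suc.IH by (rule notified_log_entries)
  have relayed: "fst y \<le> Suc j \<and> entry_ids (snd y) \<subseteq> V"
    if "y \<in> set (relay (Suc j) u (inbox j v u))" for y u
  proof (rule relay_entry[OF that])
    fix x b assume y: "y = (Suc j, Relayed u x b)" and e: "{v, u} \<in> G (Suc j)"
      and "Own x b \<in> snd ` set (ns_log (notified j u))"
    then have "x \<in> V" using notified[of u] by force
    moreover have "u \<in> V" using e by (rule edge_in_V)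
    ultimately show ?thesis using y by simp
  qed
  have "set (ns_log (state (Suc j) v))
      \<subseteq> set (ns_log (notified j v)) \<union> (\<Union>u. set (relay (Suc j) u (inbox j v u)))"
    by (auto simp: state_log_Suc)
  then show ?case using notified[of v] relayed by blast
qed

lemma notified_log_stamp: "y \<in> set (ns_log (notified j v)) \<Longrightarrow> fst y \<le> Suc j"
  using notified_log_entries[OF state_log_entries] by blast

lemma notified_log_ids: "y \<in> set (ns_log (notified j v)) \<Longrightarrow> entry_ids (snd y) \<subseteq> V"
  using notified_log_entries[OF state_log_entries] by blast

lemma last_own_notified_log:
  "last_own x (ns_log (notified j u)) =
     (if x \<in> toggled j u then Some (Suc j, {u, x} \<in> G (Suc j)) else last_own x (ns_log (state j u)))"
  using finite_toggled[of j u]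
  by (simp add: notified_log last_own_append last_own_own_entries[where P = "\<lambda>x. {u, x} \<in> G (Suc j)"])

lemma last_own_state_log_Suc: "last_own x (ns_log (state (Suc j) u)) = last_own x (ns_log (notified j u))"
  unfolding state_log_Suc by (rule last_own_append_no_own) (auto dest!: relay_set)

lemma last_own_log_iff:
  "last_own x (ns_log (state r u)) = Some (t, True) \<longleftrightarrow> {u, x} \<in> G r \<and> t = ins_time G r {u, x}"
proof (induction r arbitrary: t)
  case 0
  then show ?case by (simp add: node_init_def)
next
  case (Suc j)
  show ?case
  proof (cases "x \<in> toggled j u")
    case True
    then have "{u, x} \<in> G (Suc j) \<Longrightarrow> ins_time G (Suc j) {u, x} = Suc j"
      by (intro ins_time_new) (auto simp: toggled_def)
    then show ?thesis using True by (auto simp: last_own_state_log_Suc last_own_notified_log)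
  next
    case False
    then have "{u, x} \<in> G (Suc j) \<longleftrightarrow> {u, x} \<in> G j" by (simp add: toggled_def)
    moreover have "{u, x} \<in> G j \<Longrightarrow> ins_time G (Suc j) {u, x} = ins_time G j {u, x}"
      by (rule ins_time_old)
    ultimately show ?thesis
      using False Suc.IH by (auto simp: last_own_state_log_Suc last_own_notified_log)
  qed
qed

section \<open>Correctness of the answers\<close>

lemma relayed_since_own_notified:
  assumes "relayed_from w (since_own w (ns_log (state j u))) = filter (\<lambda>y. is_own (snd y)) (ns_heard (state j u) w)"
  shows "relayed_from w (since_own w (ns_log (notified j u))) = filter (\<lambda>y. is_own (snd y)) (ns_heard (notified j u) w)"
proof -
  let ?new = "map (\<lambda>x. (Suc j, Own x ({u, x} \<in> G (Suc j)))) (sorted_list_of_set (toggled j u))"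
  have new_own: "relayed_from w zs = []" if "set zs \<subseteq> set ?new" for zs
    using that by (intro relayed_from_own_entries) auto
  show ?thesis
  proof (cases "w \<in> toggled j u")
    case True
    then have "\<exists>y\<in>set ?new. is_own_of w (snd y)" using finite_toggled[of j u] by force
    then have "since_own w (ns_log (notified j u)) = since_own w ?new"
      unfolding notified_log by (rule since_own_append_own)
    moreover have "relayed_from w (since_own w ?new) = []"
      by (rule new_own) (rule since_own_subset)
    ultimately show ?thesis using True by simp
  next
    case False
    then have "\<forall>y\<in>set ?new. \<not> is_own_of w (snd y)" using finite_toggled[of j u] by auto
    then have "since_own w (ns_log (notified j u)) = since_own w (ns_log (state j u)) @ ?new"
      unfolding notified_log by (rule since_own_append_no_own)
    then show ?thesis using False assms new_own[of ?new] by simp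
  qed
qed

lemma relayed_since_own_eq_heard:
  "relayed_from w (since_own w (ns_log (state r u))) = filter (\<lambda>y. is_own (snd y)) (ns_heard (state r u) w)"
proof (induction r arbitrary: u)
  case 0
  then show ?case by (simp add: node_init_def since_own_def)
next
  case (Suc j)
  let ?R = "concat (map (\<lambda>u'. relay (Suc j) u' (inbox j u u')) (sorted_list_of_set (ns_nbrs (notified j u))))"
  have "since_own w (ns_log (state (Suc j) u)) = since_own w (ns_log (notified j u)) @ ?R"
    unfolding state_log_Suc by (rule since_own_append_no_own) (auto dest!: relay_set)
  moreover have "relayed_from w ?R = (if {u, w} \<in> G (Suc j)
      then filter (\<lambda>y. is_own (snd y)) (heard_entry (Suc j) (inbox j u w)) else [])"
    using finite_nbrs_notified[of j u] by (simp add: relayed_from_relays)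
  ultimately show ?case
    using relayed_since_own_notified[OF Suc.IH] by (simp add: state_heard_Suc)
qed

lemma heard_not_edge: "{v, u} \<notin> G r \<Longrightarrow> ns_heard (state r v) u = []"
proof (induction r)
  case 0
  then show ?case by (simp add: node_init_def)
next
  case (Suc j)
  then show ?case by (auto simp: state_heard_Suc toggled_def)
qed

lemma sent_prefix_Suc:
  "take (ns_sent (state (Suc j) u)) (ns_log (state (Suc j) u)) =
   take (ns_sent (state j u)) (ns_log (state j u)) @ take 1 (drop (ns_sent (state j u)) (ns_log (notified j u)))"
proof -
  let ?s = "ns_sent (state j u)" and ?L = "ns_log (notified j u)"
  have s: "?s \<le> length (ns_log (state j u))" by (rule state_sent_le)
  have "take (ns_sent (state (Suc j) u)) (ns_log (state (Suc j) u)) = take (Suc ?s) ?L"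
    by (simp add: state_sent_Suc state_log_Suc min_def)
  also have "\<dots> = take ?s ?L @ take 1 (drop ?s ?L)"
    using take_add[of ?s 1 ?L] by simp
  also have "take ?s ?L = take ?s (ns_log (state j u))" using s by (simp add: notified_log)
  finally show ?thesis .
qed

lemma heard_entry_from_nbr:
  assumes "{v, u} \<in> G (Suc j)"
  shows "later_copy (heard_entry (Suc j) (inbox j v u)) (take 1 (drop (ns_sent (state j u)) (ns_log (notified j u))))"
  using assms notified_log_stamp[OF nth_mem, of "ns_sent (state j u)" j u]
  by (auto simp: inbox_nbr heard_entry_def node_message_def next_entry_def later_copy_def
      take_Suc_conv_app_nth Cons_nth_drop_Suc)

lemma heard_sent_suffix:
  "{v, u} \<in> G r \<Longrightarrow>
   heard_suffix (ns_heard (state r v) u) (take (ns_sent (state r u)) (ns_log (state r u)))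
     (ins_time G r {v, u})"
proof (induction r)
  case 0
  then show ?case by simp
next
  case (Suc j)
  have "heard_suffix (ns_heard (notified j v) u) (take (ns_sent (state j u)) (ns_log (state j u)))
      (ins_time G (Suc j) {v, u})"
  proof (cases "u \<in> toggled j v")
    case True
    then have "ins_time G (Suc j) {v, u} = Suc j"
      using Suc.prems by (intro ins_time_new) (auto simp: toggled_def)
    moreover have "\<forall>y\<in>set (take (ns_sent (state j u)) (ns_log (state j u))). fst y \<le> j"
      using state_log_entries[of j u] by (auto dest: in_set_takeD)
    ultimately show ?thesis using True by (auto intro!: heard_suffix_Nil simp: less_Suc_eq_le)
  next
    case False
    then have "{v, u} \<in> G j" using Suc.prems by (simp add: toggled_def)
    then show ?thesis using False Suc.IH by (simp add: ins_time_old)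
  qed
  then show ?case
    using Suc.prems heard_entry_from_nbr[OF Suc.prems]
    by (simp add: state_heard_Suc sent_prefix_Suc heard_suffix_append)
qed

lemma flushing_sent_all:
  assumes "flushing (notified j u)"
  shows "take (ns_sent (state (Suc j) u)) (ns_log (state (Suc j) u)) = ns_log (notified j u)"
proof -
  have "ns_sent (state (Suc j) u) = length (ns_log (notified j u))"
    using assms by (simp add: state_sent_Suc flushing_def)
  then show ?thesis by (simp add: state_log_Suc)
qed

lemma consistent_nbrs_stable:
  "ns_consistent (state (Suc p) v) \<Longrightarrow> {v, u} \<in> G (Suc p) \<longleftrightarrow> {v, u} \<in> G p"
  by (auto simp: state_consistent_Suc toggled_def)

lemma consistent_nbr:
  assumes "ns_consistent (state (Suc p) v)" "{v, u} \<in> G (Suc p)"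
  shows "{v, u} \<in> G p" "ns_nbrs_flushed (state p u)"
    "heard_suffix (ns_heard (state (Suc p) v) u) (ns_log (state p u)) (ins_time G p {v, u})"
proof -
  have "settled (notified p u)" using assms by (simp add: state_consistent_Suc)
  then have fl: "flushing (notified p u)" and tu: "toggled p u = {}"
    and "ns_nbrs_flushed (state p u)" by (simp_all add: settled_def)
  then show "ns_nbrs_flushed (state p u)" by simp
  show vu: "{v, u} \<in> G p" using assms consistent_nbrs_stable by blast
  have "ns_log (notified p u) = ns_log (state p u)" using tu by (simp add: notified_log)
  then show "heard_suffix (ns_heard (state (Suc p) v) u) (ns_log (state p u)) (ins_time G p {v, u})"
    using heard_sent_suffix[OF assms(2)] flushing_sent_all[OF fl] ins_time_old[OF vu] by simp
qed

lemma nbrs_flushed_nbr: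
  assumes "ns_nbrs_flushed (state p u)" "{u, w} \<in> G p"
  obtains q where "p = Suc q"
    "heard_suffix (ns_heard (state p u) w) (ns_log (notified q w)) (ins_time G p {u, w})"
proof -
  obtain q where p: "p = Suc q" using assms(2) by (cases p) auto
  then have "flushing (notified q w)" using assms by (simp add: state_nbrs_flushed_Suc)
  then show ?thesis using that p heard_sent_suffix[of u w p] assms(2) flushing_sent_all by simp
qed

lemma consistent_two_hop_sound:
  assumes "ns_consistent (state (Suc p) v)" "{v, u} \<in> G (Suc p)"
    "last_status w (ns_heard (state (Suc p) v) u) = Some True"
  shows "{u, w} \<in> G p"
proof -
  obtain t where "last_own w (ns_log (state p u)) = Some (t, True)"
    using heard_suffix_own_status[OF consistent_nbr(3)[OF assms(1,2)] assms(3)] by blast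
  then show ?thesis by (simp add: last_own_log_iff)
qed

lemma consistent_three_hop_sound:
  assumes "ns_consistent (state (Suc p) v)" "{v, u} \<in> G (Suc p)"
    "last_status x (relayed_from w (since_own w (ns_heard (state (Suc p) v) u))) = Some True"
  shows "{u, w} \<in> G p" "{w, x} \<in> G p"
proof -
  obtain t where "last_own x (relayed_from w (since_own w (ns_log (state p u)))) = Some (t, True)"
    using heard_suffix_relayed_status[OF consistent_nbr(3)[OF assms(1,2)] assms(3)] by blast
  then have heard: "last_own x (ns_heard (state p u) w) = Some (t, True)"
    by (simp add: relayed_since_own_eq_heard last_own_filter_own)
  then show uw: "{u, w} \<in> G p" using heard_not_edge by fastforce
  obtain q where p: "p = Suc q"
    and hs: "heard_suffix (ns_heard (state p u) w) (ns_log (notified q w)) (ins_time G p {u, w})"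
    using nbrs_flushed_nbr[OF consistent_nbr(2)[OF assms(1,2)] uw] by blast
  have "last_status x (ns_heard (state p u) w) = Some True"
    using heard by (simp add: last_status_def)
  then obtain t' where "last_own x (ns_log (notified q w)) = Some (t', True)"
    using heard_suffix_own_status[OF hs] by blast
  then have "last_own x (ns_log (state p w)) = Some (t', True)"
    using p by (simp add: last_own_state_log_Suc)
  then show "{w, x} \<in> G p" by (simp add: last_own_log_iff)
qed

lemma answer_sound:
  assumes "ns_consistent (state (Suc p) v)" "node_answer (state (Suc p) v) e"
  shows "e \<in> E3 G v p"
proof -
  obtain u where u: "{v, u} \<in> G (Suc p)" and listed: "e = {v, u}
      \<or> (\<exists>w. last_status w (ns_heard (state (Suc p) v) u) = Some True \<and> e = {u, w})
      \<or> (\<exists>w x. last_status x (relayed_from w (since_own w (ns_heard (state (Suc p) v) u)))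
               = Some True \<and> (e = {u, w} \<or> e = {w, x}))"
    using assms(2) by (auto simp: node_answer_def state_nbrs)
  have vu: "{v, u} \<in> G p" using consistent_nbr(1)[OF assms(1) u] .
  from listed consider (incident) "e = {v, u}"
    | (two) w where "last_status w (ns_heard (state (Suc p) v) u) = Some True" "e = {u, w}"
    | (three) w x where
        "last_status x (relayed_from w (since_own w (ns_heard (state (Suc p) v) u))) = Some True"
        "e = {u, w} \<or> e = {w, x}"
    by blast
  then show ?thesis
  proof cases
    case incident
    then show ?thesis using vu by (auto simp: E3_def dist_le2_def)
  next
    case two
    then show ?thesis using consistent_two_hop_sound[OF assms(1) u] vu by (auto simp: E3_def dist_le2_def)
  next
    case three
    then show ?thesis using consistent_three_hop_sound[OF assms(1) u] vu
      by (auto simp: E3_def dist_le2_def)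
  qed
qed

lemma consistent_two_hop_complete:
  assumes "ns_consistent (state (Suc p) v)" "{v, u} \<in> G p" "{u, w} \<in> G p"
    "ins_time G p {v, u} \<le> ins_time G p {u, w}"
  shows "last_status w (ns_heard (state (Suc p) v) u) = Some True"
proof -
  have vu: "{v, u} \<in> G (Suc p)" using assms(1,2) consistent_nbrs_stable by blast
  have "last_own w (ns_log (state p u)) = Some (ins_time G p {u, w}, True)"
    using assms(3) by (simp add: last_own_log_iff)
  then obtain t where "last_own w (ns_heard (state (Suc p) v) u) = Some (t, True)"
    using heard_suffix_own_recent[OF consistent_nbr(3)[OF assms(1) vu]] assms(4) by blast
  then show ?thesis by (simp add: last_status_def)
qed

lemma consistent_three_hop_complete:
  assumes "ns_consistent (state (Suc p) v)" "{v, u} \<in> G p" "{u, w} \<in> G p" "{w, x} \<in> G p"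
    "ins_time G p {u, w} \<le> ins_time G p {w, x}" "ins_time G p {v, u} \<le> ins_time G p {w, x}"
  shows "last_status x (relayed_from w (since_own w (ns_heard (state (Suc p) v) u))) = Some True"
proof -
  have vu: "{v, u} \<in> G (Suc p)" using assms(1,2) consistent_nbrs_stable by blast
  obtain q where p: "p = Suc q"
    and hs: "heard_suffix (ns_heard (state p u) w) (ns_log (notified q w)) (ins_time G p {u, w})"
    using nbrs_flushed_nbr[OF consistent_nbr(2)[OF assms(1) vu] assms(3)] by blast
  have "last_own x (ns_log (notified q w)) = Some (ins_time G p {w, x}, True)"
    using assms(4) p by (simp add: last_own_log_iff flip: last_own_state_log_Suc)
  then obtain t where t: "ins_time G p {w, x} \<le> t" "last_own x (ns_heard (state p u) w) = Some (t, True)"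
    using heard_suffix_own_recent[OF hs] assms(5) by blast
  then have "last_own x (relayed_from w (since_own w (ns_log (state p u)))) = Some (t, True)"
    by (simp add: relayed_since_own_eq_heard last_own_filter_own)
  then show ?thesis
    using heard_suffix_relayed_recent[OF consistent_nbr(3)[OF assms(1) vu]] t(1) assms(6) by simp
qed

lemma answer_complete:
  assumes "ns_consistent (state (Suc p) v)" "e \<in> R3 G v p"
  shows "node_answer (state (Suc p) v) e"
proof -
  have nbr: "u \<in> ns_nbrs (state (Suc p) v) \<longleftrightarrow> {v, u} \<in> G p" for u
    using assms(1) consistent_nbrs_stable by (simp add: state_nbrs)
  consider (incident) "e \<in> G p" "v \<in> e"
    | (two) u w where "e = {v, u} \<or> e = {u, w}" "{v, u} \<in> G p" "{u, w} \<in> G p"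
        "ins_time G p {v, u} \<le> ins_time G p {u, w}"
    | (three) u w x where "e = {v, u} \<or> e = {u, w} \<or> e = {w, x}" "{v, u} \<in> G p" "{u, w} \<in> G p"
        "{w, x} \<in> G p" "ins_time G p {u, w} \<le> ins_time G p {w, x}"
        "ins_time G p {v, u} \<le> ins_time G p {w, x}"
    using assms(2) unfolding R3_def by blast
  then show ?thesis
  proof cases
    case incident
    then obtain u where "e = {v, u}" by (auto elim!: edge_cases)
    then show ?thesis using incident nbr by (auto simp: node_answer_def)
  next
    case two
    have "u \<in> ns_nbrs (state (Suc p) v)" using two(2) nbr by simp
    moreover have "last_status w (ns_heard (state (Suc p) v) u) = Some True"
      using consistent_two_hop_complete[OF assms(1) two(2-4)] .
    ultimately show ?thesis
      using two(1) unfolding node_answer_def by (intro bexI[of _ u]) auto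
  next
    case three
    have "u \<in> ns_nbrs (state (Suc p) v)" using three(2) nbr by simp
    moreover have "last_status x (relayed_from w (since_own w (ns_heard (state (Suc p) v) u))) = Some True"
      using consistent_three_hop_complete[OF assms(1) three(2-6)] .
    ultimately show ?thesis
      using three(1) unfolding node_answer_def by (intro bexI[of _ u]) auto
  qed
qed

end

section \<open>Amortized number of inconsistent rounds\<close>

definition backlog :: "node_state \<Rightarrow> nat" where
  "backlog s = length (ns_log s) - ns_sent s"

definition pending_own :: "node_state \<Rightarrow> nat" where
  "pending_own s = length (filter (\<lambda>y. is_own (snd y)) (drop (ns_sent s) (ns_log s)))"

definition sends_own :: "node_state \<Rightarrow> bool" where
  "sends_own s \<longleftrightarrow> (\<exists>x b. next_entry s = Some (Own x b))"

context dyn_network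
begin

definition round_changes :: "nat \<Rightarrow> nat set set" where
  "round_changes j = (G (Suc j) - G j) \<union> (G j - G (Suc j))"

lemma changes_Suc: "changes G (Suc r) = changes G r + card (round_changes r)"
  by (simp add: changes_def round_changes_def)

lemma finite_round_changes: "finite (round_changes j)"
  using finite_G by (simp add: round_changes_def)

lemma toggled_bij: "bij_betw (\<lambda>x. {u, x}) (toggled j u) {e \<in> round_changes j. u \<in> e}"
proof (rule bij_betw_imageI)
  show "inj_on (\<lambda>x. {u, x}) (toggled j u)" by (auto simp: inj_on_def doubleton_eq_iff)
  have "e \<in> (\<lambda>x. {u, x}) ` toggled j u" if e: "e \<in> round_changes j" and ue: "u \<in> e" for e
  proof -
    have "e \<in> G (Suc j) \<or> e \<in> G j" using e by (auto simp: round_changes_def)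
    then obtain a b where "e = {a, b}" "a \<noteq> b" by (auto elim: edge_cases)
    then obtain x where "e = {u, x}" using ue by auto
    then show ?thesis using e by (auto simp: toggled_def round_changes_def)
  qed
  then show "(\<lambda>x. {u, x}) ` toggled j u = {e \<in> round_changes j. u \<in> e}"
    by (auto simp: toggled_def round_changes_def)
qed

lemma card_toggled: "card (toggled j u) = card {e \<in> round_changes j. u \<in> e}"
  using toggled_bij by (rule bij_betw_same_card)

lemma card_toggled_le: "card (toggled j u) \<le> card (round_changes j)"
  unfolding card_toggled by (rule card_mono[OF finite_round_changes]) auto

lemma sum_card_toggled: "(\<Sum>u\<in>V. card (toggled j u)) = 2 * card (round_changes j)"
proof -
  have "(\<Sum>u\<in>V. card {e \<in> round_changes j. u \<in> e}) = 2 * card (round_changes j)"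
  proof (rule sum_multicount[OF finite_V finite_round_changes], rule ballI)
    fix e assume "e \<in> round_changes j"
    then have "e \<in> G (Suc j) \<or> e \<in> G j" by (auto simp: round_changes_def)
    then obtain a b where "e = {a, b}" "a \<noteq> b" "a \<in> V" "b \<in> V" by (auto elim: edge_cases)
    then have "{i \<in> V. i \<in> e} = {a, b}" by auto
    then show "card {i \<in> V. i \<in> e} = 2" using \<open>a \<noteq> b\<close> by simp
  qed
  then show ?thesis by (simp add: card_toggled)
qed

definition total_pending_own :: "nat \<Rightarrow> nat" where
  "total_pending_own r = (\<Sum>u\<in>V. pending_own (state r u))"

definition own_broadcasts :: "nat \<Rightarrow> nat" where
  "own_broadcasts j = (\<Sum>w\<in>V. if sends_own (notified j w) then 1 else 0)"

definition busy :: "nat \<Rightarrow> bool" where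
  "busy j \<longleftrightarrow> (\<exists>z\<in>V. 0 < backlog (notified j z))"

definition busy_rounds :: "nat \<Rightarrow> nat" where
  "busy_rounds r = card {j. j < r \<and> busy j}"

lemma length_notified_log: "length (ns_log (notified j u)) = length (ns_log (state j u)) + card (toggled j u)"
  using finite_toggled[of j u] by (simp add: notified_log)

lemma backlog_notified: "backlog (notified j u) = backlog (state j u) + card (toggled j u)"
  using state_sent_le[of j u] by (simp add: backlog_def length_notified_log)

lemma pending_own_notified: "pending_own (notified j u) = pending_own (state j u) + card (toggled j u)"
  using state_sent_le[of j u] finite_toggled[of j u]
  by (simp add: pending_own_def notified_log comp_def)

lemma length_relays_le:
  "length (concat (map (\<lambda>w. relay t w (inbox j u w)) (sorted_list_of_set (ns_nbrs (notified j u)))))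
   \<le> own_broadcasts j"
proof -
  have "length (concat (map (\<lambda>w. relay t w (inbox j u w)) (sorted_list_of_set (ns_nbrs (notified j u)))))
      = (\<Sum>w\<in>ns_nbrs (notified j u). length (relay t w (inbox j u w)))"
    using finite_nbrs_notified[of j u] by (simp add: length_concat comp_def sum_list_distinct_conv_sum_set)
  also have "\<dots> = (\<Sum>w\<in>ns_nbrs (notified j u). if sends_own (notified j w) then 1 else 0)"
    by (rule sum.cong)
      (auto simp: inbox_nbr relay_def node_message_def sends_own_def split: option.splits entry.splits)
  also have "\<dots> \<le> own_broadcasts j"
    unfolding own_broadcasts_def by (rule sum_mono2[OF finite_V]) (auto dest: edge_in_V)
  finally show ?thesis .
qed

lemma backlog_Suc:
  "backlog (state (Suc j) u) + (if 0 < backlog (notified j u) then 1 else 0)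
   \<le> backlog (notified j u) + own_broadcasts j"
proof -
  have "length (ns_log (state (Suc j) u)) \<le> length (ns_log (notified j u)) + own_broadcasts j"
    using length_relays_le[of "Suc j" j u] by (simp add: state_log_Suc)
  moreover have "ns_sent (state j u) \<le> length (ns_log (notified j u))"
    using state_sent_le[of j u] by (simp add: length_notified_log)
  ultimately show ?thesis by (auto simp: backlog_def state_sent_Suc)
qed

lemma pending_own_Suc:
  "pending_own (state (Suc j) u) + (if sends_own (notified j u) then 1 else 0) = pending_own (notified j u)"
proof -
  let ?L = "ns_log (notified j u)" and ?s = "ns_sent (state j u)"
  have s: "?s \<le> length ?L" using state_sent_le[of j u] by (simp add: length_notified_log)
  have "drop (ns_sent (state (Suc j) u)) (ns_log (state (Suc j) u))
      = drop (min (Suc ?s) (length ?L)) ?L @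
        concat (map (\<lambda>w. relay (Suc j) w (inbox j u w)) (sorted_list_of_set (ns_nbrs (notified j u))))"
    using s by (simp add: state_log_Suc state_sent_Suc)
  then have "pending_own (state (Suc j) u)
      = length (filter (\<lambda>y. is_own (snd y)) (drop (min (Suc ?s) (length ?L)) ?L))"
    by (auto simp: pending_own_def filter_empty_conv dest!: relay_set)
  moreover have "pending_own (notified j u)
      = length (filter (\<lambda>y. is_own (snd y)) (drop (min (Suc ?s) (length ?L)) ?L))
        + (if sends_own (notified j u) then 1 else 0)"
  proof (cases "?s < length ?L")
    case True
    then have "drop ?s ?L = ?L ! ?s # drop (Suc ?s) ?L" by (simp add: Cons_nth_drop_Suc)
    moreover have "sends_own (notified j u) \<longleftrightarrow> is_own (snd (?L ! ?s))"
      using True by (cases "snd (?L ! ?s)") (auto simp: sends_own_def next_entry_def)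
    ultimately show ?thesis using True by (simp add: pending_own_def)
  next
    case False
    then show ?thesis using s by (simp add: pending_own_def sends_own_def next_entry_def)
  qed
  ultimately show ?thesis by simp
qed

lemma total_pending_own_Suc:
  "total_pending_own (Suc j) + own_broadcasts j = total_pending_own j + 2 * card (round_changes j)"
proof -
  have "total_pending_own (Suc j) + own_broadcasts j
      = (\<Sum>u\<in>V. pending_own (state (Suc j) u) + (if sends_own (notified j u) then 1 else 0))"
    by (simp add: total_pending_own_def own_broadcasts_def sum.distrib)
  also have "\<dots> = (\<Sum>u\<in>V. pending_own (state j u) + card (toggled j u))"
    by (simp add: pending_own_Suc pending_own_notified)
  also have "\<dots> = total_pending_own j + 2 * card (round_changes j)"
    by (simp add: total_pending_own_def sum.distrib sum_card_toggled)
  finally show ?thesis .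
qed

lemma busy_rounds_Suc: "busy_rounds (Suc j) = busy_rounds j + (if busy j then 1 else 0)"
proof -
  have "{i. i < Suc j \<and> busy i} = {i. i < j \<and> busy i} \<union> (if busy j then {j} else {})"
    by (auto simp: less_Suc_eq)
  then show ?thesis by (simp add: busy_rounds_def)
qed

lemma busy_slack:
  assumes "busy j" "\<And>u. backlog (state j u) + total_pending_own j + busy_rounds j \<le> 3 * changes G j"
  shows "total_pending_own j + busy_rounds j + 1 \<le> 3 * changes G j + card (round_changes j)"
proof -
  obtain z where "0 < backlog (state j z) + card (toggled j z)"
    using assms(1) by (auto simp: busy_def backlog_notified)
  then show ?thesis using assms(2)[of z] card_toggled_le[of j z] by linarith
qed

lemma potential_bound: "backlog (state r u) + total_pending_own r + busy_rounds r \<le> 3 * changes G r"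
proof (induction r arbitrary: u)
  case 0
  then show ?case
    by (simp add: backlog_def total_pending_own_def pending_own_def busy_rounds_def node_init_def)
next
  case (Suc j)
  let ?k = "card (round_changes j)"
  have step: "backlog (state (Suc j) u) + (if 0 < backlog (notified j u) then 1 else 0)
      + total_pending_own (Suc j) \<le> backlog (state j u) + card (toggled j u) + total_pending_own j + 2 * ?k"
    using backlog_Suc[of j u] total_pending_own_Suc[of j] backlog_notified[of j u] by simp
  have toggled: "card (toggled j u) \<le> ?k" by (rule card_toggled_le)
  show ?case
  proof (cases "busy j \<and> backlog (notified j u) = 0")
    case True
    then have "total_pending_own j + busy_rounds j + 1 \<le> 3 * changes G j + ?k"
      using busy_slack Suc.IH by blast
    then show ?thesis
      using True step backlog_notified[of j u] by (simp add: changes_Suc busy_rounds_Suc)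
  next
    case False
    then have "busy_rounds (Suc j) \<le> busy_rounds j + (if 0 < backlog (notified j u) then 1 else 0)"
      by (auto simp: busy_rounds_Suc)
    then show ?thesis using step toggled Suc.IH[of u] by (simp add: changes_Suc)
  qed
qed

lemma busy_rounds_bound: "busy_rounds r \<le> 3 * changes G r"
  using potential_bound[of r 0] by linarith

lemma inconsistent_cause:
  assumes "\<not> ns_consistent (state (Suc j) v)"
  shows "round_changes j \<noteq> {} \<or> busy j \<or> (\<exists>i. j = Suc i \<and> busy i)"
proof -
  have toggled_change: "toggled j w \<noteq> {} \<Longrightarrow> round_changes j \<noteq> {}" for w
    by (auto simp: toggled_def round_changes_def)
  have not_flushing_busy: "\<not> flushing (notified i w) \<Longrightarrow> w \<in> V \<Longrightarrow> busy i" for i w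
    unfolding flushing_def busy_def backlog_def by (intro bexI[of _ w]) auto
  consider "toggled j v \<noteq> {}" | u where "{v, u} \<in> G (Suc j)" "\<not> settled (notified j u)"
    using assms by (auto simp: state_consistent_Suc)
  then show ?thesis
  proof cases
    case 1
    then show ?thesis using toggled_change by blast
  next
    case 2
    then have u: "u \<in> V" by (auto dest: edge_in_V)
    consider "toggled j u \<noteq> {}" | "\<not> flushing (notified j u)" | "\<not> ns_nbrs_flushed (state j u)"
      using 2 by (auto simp: settled_def)
    then show ?thesis
    proof cases
      case 3
      then obtain i where i: "j = Suc i" by (cases j) (auto simp: node_init_def)
      then obtain w where "{u, w} \<in> G (Suc i)" "\<not> flushing (notified i w)"
        using 3 by (auto simp: state_nbrs_flushed_Suc)
      then have "busy i" using not_flushing_busy edge_in_V by blast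
      then show ?thesis using i by blast
    qed (use toggled_change not_flushing_busy u in blast)+
  qed
qed

lemma change_rounds_bound: "card {j. j < i \<and> round_changes j \<noteq> {}} \<le> changes G i"
proof (induction i)
  case 0
  then show ?case by simp
next
  case (Suc i)
  have "{j. j < Suc i \<and> round_changes j \<noteq> {}}
      = {j. j < i \<and> round_changes j \<noteq> {}} \<union> (if round_changes i \<noteq> {} then {i} else {})"
    by (auto simp: less_Suc_eq)
  moreover have "round_changes i \<noteq> {} \<Longrightarrow> 1 \<le> card (round_changes i)"
    using finite_round_changes[of i] by (simp add: Suc_leI card_gt_0_iff)
  ultimately show ?case
    using Suc.IH by (cases "round_changes i = {}") (simp_all add: changes_Suc)
qed

lemma inconsistent_rounds_bound:
  "card {j \<in> {1..i}. \<exists>v\<in>V. \<not> ns_consistent (state j v)} \<le> 7 * changes G i"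
proof -
  let ?C = "{j. j < i \<and> round_changes j \<noteq> {}}" and ?B = "{j. j < i \<and> busy j}"
  have "{j \<in> {1..i}. \<exists>v\<in>V. \<not> ns_consistent (state j v)} \<subseteq> Suc ` ?C \<union> Suc ` ?B \<union> (Suc \<circ> Suc) ` ?B"
  proof
    fix j assume "j \<in> {j \<in> {1..i}. \<exists>v\<in>V. \<not> ns_consistent (state j v)}"
    then obtain j' v where j: "j = Suc j'" "j' < i" "\<not> ns_consistent (state (Suc j') v)"
      by (cases j) auto
    from inconsistent_cause[OF j(3)] show "j \<in> Suc ` ?C \<union> Suc ` ?B \<union> (Suc \<circ> Suc) ` ?B"
    proof (elim disjE exE conjE)
      fix i' assume "j' = Suc i'" "busy i'"
      then show ?thesis using j by auto
    qed (use j in auto)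
  qed
  then have "card {j \<in> {1..i}. \<exists>v\<in>V. \<not> ns_consistent (state j v)}
      \<le> card (Suc ` ?C \<union> Suc ` ?B \<union> (Suc \<circ> Suc) ` ?B)"
    by (intro card_mono) auto
  also have "\<dots> \<le> card (Suc ` ?C) + card (Suc ` ?B) + card ((Suc \<circ> Suc) ` ?B)"
    by (meson card_Un_le add_mono order_trans order_refl)
  also have "\<dots> \<le> card ?C + card ?B + card ?B"
    by (intro add_mono card_image_le) auto
  also have "\<dots> \<le> 7 * changes G i"
    using change_rounds_bound[of i] busy_rounds_bound[of i] by (simp add: busy_rounds_def)
  finally show ?thesis .
qed

end

section \<open>Message encoding and the data structure\<close>

fun bits :: "nat \<Rightarrow> nat \<Rightarrow> bool list" where
  "bits 0 x = []"
| "bits (Suc L) x = odd x # bits L (x div 2)"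

fun from_bits :: "bool list \<Rightarrow> nat" where
  "from_bits [] = 0"
| "from_bits (b # bs) = of_bool b + 2 * from_bits bs"

lemma length_bits [simp]: "length (bits L x) = L"
  by (induction L arbitrary: x) auto

lemma from_bits_bits: "x < 2 ^ L \<Longrightarrow> from_bits (bits L x) = x"
proof (induction L arbitrary: x)
  case (Suc L)
  then have "from_bits (bits L (x div 2)) = x div 2" by simp
  then show ?case by simp
qed simp

definition encode :: "nat \<Rightarrow> message \<Rightarrow> bool list" where
  "encode L m = (case m of
      (f, g, None) \<Rightarrow> [f, g, False, False, False] @ bits L 0 @ bits L 0
    | (f, g, Some (Own x b)) \<Rightarrow> [f, g, True, False, b] @ bits L x @ bits L 0
    | (f, g, Some (Relayed w x b)) \<Rightarrow> [f, g, False, True, b] @ bits L w @ bits L x)"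

definition decode :: "nat \<Rightarrow> bool list \<Rightarrow> message" where
  "decode L cs = (cs ! 0, cs ! 1,
     if cs ! 2 then Some (Own (from_bits (take L (drop 5 cs))) (cs ! 4))
     else if cs ! 3 then Some (Relayed (from_bits (take L (drop 5 cs))) (from_bits (drop (5 + L) cs)) (cs ! 4))
     else None)"

lemma length_encode: "length (encode L m) = 5 + 2 * L"
  by (auto simp: encode_def split: prod.splits option.splits entry.splits)

lemma decode_encode:
  assumes "\<forall>e. snd (snd m) = Some e \<longrightarrow> (\<forall>x\<in>entry_ids e. x < 2 ^ L)"
  shows "decode L (encode L m) = m"
proof -
  have drop5: "drop (5 + L) (a # b # c # d # e # xs @ ys) = drop L (xs @ ys)" for a b c d e and xs ys :: "bool list"
    by (simp add: numeral_eq_Suc)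
  show ?thesis
    using assms
    by (auto simp: decode_def encode_def from_bits_bits drop5 numeral_eq_Suc
        split: prod.splits option.splits entry.splits)
qed

datatype event = Init nat nat | Notify "nat list" "nat list" | Receive "(nat \<times> bool list option) list"

instance event :: countable by countable_datatype

definition id_bits :: "nat \<Rightarrow> nat \<Rightarrow> nat" where
  "id_bits K n = K * nat \<lceil>log 2 (real n + 1)\<rceil>"

fun replay_step :: "nat \<Rightarrow> node_state \<Rightarrow> event \<Rightarrow> node_state" where
  "replay_step K s (Init n v) = node_init n v"
| "replay_step K s (Notify I D) = node_notify s (set I) (set D)"
| "replay_step K s (Receive ms) = node_receive s (\<lambda>u. case map_of ms u of
     Some (Some cs) \<Rightarrow> Some (decode (id_bits K (ns_size s)) cs) | _ \<Rightarrow> None)"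

definition history :: "nat \<Rightarrow> event list" where
  "history s = from_nat s"

definition replay :: "nat \<Rightarrow> nat \<Rightarrow> node_state" where
  "replay K s = foldl (replay_step K) (node_init 0 0) (history s)"

(* A local state is the code of the node's event history, from which the node_state is replayed;
   identifiers are sent with id_bits K n bits each. *)
definition listing_alg :: "nat \<Rightarrow> dalg" where
  "listing_alg K = \<lparr>init = (\<lambda>n v. to_nat [Init n v]),
     notify = (\<lambda>s I D. to_nat (history s @ [Notify (sorted_list_of_set I) (sorted_list_of_set D)])),
     send = (\<lambda>s u. Some (encode (id_bits K (ns_size (replay K s))) (node_message (replay K s)))),
     receive = (\<lambda>s M. to_nat (history s @
       [Receive (map (\<lambda>u. (u, M u)) (sorted_list_of_set (ns_nbrs (replay K s))))])),
     consistent = (\<lambda>s. ns_consistent (replay K s)),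
     answer = (\<lambda>s e. node_answer (replay K s) e)\<rparr>"

lemma listing_alg_simps:
  "init (listing_alg K) n v = to_nat [Init n v]"
  "notify (listing_alg K) s I D = to_nat (history s @ [Notify (sorted_list_of_set I) (sorted_list_of_set D)])"
  "send (listing_alg K) s u = Some (encode (id_bits K (ns_size (replay K s))) (node_message (replay K s)))"
  "receive (listing_alg K) s M =
     to_nat (history s @ [Receive (map (\<lambda>u. (u, M u)) (sorted_list_of_set (ns_nbrs (replay K s))))])"
  "consistent (listing_alg K) s = ns_consistent (replay K s)"
  "answer (listing_alg K) s e = node_answer (replay K s) e"
  by (simp_all add: listing_alg_def)

lemma replay_snoc: "replay K (to_nat (history s @ [ev])) = replay_step K (replay K s) ev"
  by (simp add: replay_def history_def)

lemma less_two_power_ceiling_log: "n < 2 ^ nat \<lceil>log 2 (real n + 1)\<rceil>"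
proof -
  have "real n + 1 = 2 powr (log 2 (real n + 1))" by simp
  also have "\<dots> \<le> 2 powr (real (nat \<lceil>log 2 (real n + 1)\<rceil>))"
    by (rule powr_mono) linarith+
  also have "\<dots> = 2 ^ nat \<lceil>log 2 (real n + 1)\<rceil>" by (rule powr_realpow) simp
  finally have "real n + 1 \<le> real (2 ^ nat \<lceil>log 2 (real n + 1)\<rceil>)" by simp
  then show ?thesis by linarith
qed

lemma one_le_ceiling_log: "1 \<le> n \<Longrightarrow> 1 \<le> nat \<lceil>log 2 (real n + 1)\<rceil>"
proof -
  assume "1 \<le> n"
  then have "1 \<le> log 2 (real n + 1)" by simp
  then show ?thesis by linarith
qed

lemma id_less_two_power: "x < n ^ K \<Longrightarrow> x < 2 ^ id_bits K n"
proof -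
  assume "x < n ^ K"
  also have "n ^ K \<le> (2 ^ nat \<lceil>log 2 (real n + 1)\<rceil>) ^ K"
    using less_two_power_ceiling_log[of n] by (intro power_mono) auto
  also have "\<dots> = 2 ^ id_bits K n" by (simp add: id_bits_def power_mult[symmetric] mult.commute)
  finally show ?thesis .
qed

locale bounded_ids_network = dyn_network +
  fixes K :: nat
  assumes ids_bounded: "V \<subseteq> {..<n ^ K}"
begin

lemma replay_mid_state:
  assumes "\<And>v. replay K (run (listing_alg K) n G j v) = state j v"
  shows "replay K (mid_state (listing_alg K) G j (run (listing_alg K) n G j) v) = notified j v"
proof -
  have "finite (inserted j v)" "finite (deleted j v)"
    using finite_toggled[of j v] by (simp_all add: toggled_eq)
  then show ?thesis
    using assms by (simp add: mid_state_def listing_alg_simps replay_snoc notified_def inserted_def deleted_def)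
qed

lemma decoded_inbox:
  assumes "\<And>w. replay K (mid_state (listing_alg K) G j (run (listing_alg K) n G j) w) = notified j w"
  shows "(\<lambda>u. case map_of (map (\<lambda>u. (u, if {u, v} \<in> G (Suc j)
        then send (listing_alg K) (mid_state (listing_alg K) G j (run (listing_alg K) n G j) u) v else None))
      (sorted_list_of_set (ns_nbrs (notified j v)))) u of
        Some (Some cs) \<Rightarrow> Some (decode (id_bits K n) cs) | _ \<Rightarrow> None) = inbox j v"
proof
  fix u
  have ids: "\<forall>e. snd (snd (node_message (notified j u))) = Some e \<longrightarrow> (\<forall>x\<in>entry_ids e. x < 2 ^ id_bits K n)"
  proof (intro allI impI ballI)
    fix e x assume "snd (snd (node_message (notified j u))) = Some e" "x \<in> entry_ids e"
    then obtain y where "y \<in> set (ns_log (notified j u))" "x \<in> entry_ids (snd y)"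
      using next_entry_in_log by (force simp: node_message_def)
    then have "x \<in> V" using notified_log_ids by blast
    then show "x < 2 ^ id_bits K n" using ids_bounded id_less_two_power by blast
  qed
  show "(case map_of (map (\<lambda>u. (u, if {u, v} \<in> G (Suc j)
        then send (listing_alg K) (mid_state (listing_alg K) G j (run (listing_alg K) n G j) u) v else None))
      (sorted_list_of_set (ns_nbrs (notified j v)))) u of
        Some (Some cs) \<Rightarrow> Some (decode (id_bits K n) cs) | _ \<Rightarrow> None) = inbox j v u"
    using finite_nbrs_notified[of j v] decode_encode[OF ids] assms
    by (auto simp: map_of_map_restrict inbox_def listing_alg_simps insert_commute)
qed

lemma replay_run: "replay K (run (listing_alg K) n G j v) = state j v"
proof (induction j arbitrary: v)
  case 0
  then show ?case by (simp add: listing_alg_simps replay_def history_def)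
next
  case (Suc j)
  have mid: "replay K (mid_state (listing_alg K) G j (run (listing_alg K) n G j) w) = notified j w" for w
    using Suc.IH by (rule replay_mid_state)
  show ?case
    using decoded_inbox[OF mid, of v]
    by (simp add: listing_alg_simps replay_snoc mid state_Suc cong: option.case_cong)
qed

lemma one_le_size_if_edge:
  assumes "{u, v} \<in> G i"
  shows "1 \<le> n"
proof (rule ccontr)
  assume "\<not> 1 \<le> n"
  then have "n ^ K \<le> 1" by (cases K) (simp_all add: not_less_eq_eq)
  moreover have "u \<in> V" "v \<in> V" "u \<noteq> v" using assms by (rule edge_in_V)+
  ultimately have "u < 1" "v < 1" using ids_bounded by fastforce+
  then show False using \<open>u \<noteq> v\<close> by simp
qed

lemma message_length:
  assumes "{u, v} \<in> G (Suc j)" "msg (listing_alg K) n G j u v = Some m"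
  shows "length m \<le> msg_bound (2 * K + 5) n"
proof -
  have "replay K (mid_state (listing_alg K) G j (run (listing_alg K) n G j) u) = notified j u"
    using replay_run by (rule replay_mid_state)
  then have "m = encode (id_bits K n) (node_message (notified j u))"
    using assms(2) by (simp add: msg_def listing_alg_simps)
  then have "length m = 5 + 2 * (K * nat \<lceil>log 2 (real n + 1)\<rceil>)"
    by (simp add: length_encode id_bits_def)
  moreover have "1 \<le> nat \<lceil>log 2 (real n + 1)\<rceil>"
    using one_le_size_if_edge[OF assms(1)] by (rule one_le_ceiling_log)
  ultimately show ?thesis by (simp add: msg_bound_def algebra_simps)
qed

lemma listing_alg_solves: "solves_R3_listing (listing_alg K) 7 (2 * K + 5) n V G"
  unfolding solves_R3_listing_def listing_alg_simps replay_run
proof (intro conjI allI impI ballI)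
  show "length m \<le> msg_bound (2 * K + 5) n"
    if "{u, v} \<in> G (Suc j)" "msg (listing_alg K) n G j u v = Some m" for j u v m
    using that by (rule message_length)
  fix i v e assume "1 \<le> i" "ns_consistent (state i v)"
  then obtain p where "i = Suc p" "ns_consistent (state (Suc p) v)" by (cases i) auto
  then show "e \<in> R3 G v (i - 1) \<Longrightarrow> node_answer (state i v) e"
    and "e \<notin> E3 G v (i - 1) \<Longrightarrow> \<not> node_answer (state i v) e"
    using answer_complete answer_sound by auto
next
  show "card {j \<in> {1..i}. \<exists>v\<in>V. \<not> ns_consistent (state j v)} \<le> 7 * changes G i" for i
    by (rule inconsistent_rounds_bound)
qed

end

theorem theorem8:
  shows "\<forall>K::nat. \<exists>(A::dalg) (c::nat) (B::nat). \<forall>(n::nat) (V::nat set) (G::dyn_graph).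
           card V = n \<and> V \<subseteq> {..< n ^ K} \<and> valid_dyn_graph V G \<longrightarrow>
           solves_R3_listing A c B n V G"
proof (intro allI exI impI)
  fix K n V G
  assume "card V = n \<and> V \<subseteq> {..< n ^ K} \<and> valid_dyn_graph V G"
  then interpret bounded_ids_network n V G K
    by unfold_locales (auto intro: finite_subset)
  show "solves_R3_listing (listing_alg K) 7 (2 * K + 5) n V G"
    by (rule listing_alg_solves)
qed

end
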